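(* Let $X$ be a normed space and let $Y$ be a weakly sequentially complete Banach space ordered by a closed convex normal cone $K\subset Y$. Let $\alpha:\mathbb{R}_+\to\mathbb{R}_+$ be nondecreasing with $\lim_{t\to0^+}\alpha(t)/t=0$. Let $A\subset X$ be convex, let $k_0\in K\setminus\{0\}$, and let $F:X\to Y$ be strongly $\alpha(\cdot)$-$k_0$ paraconvex on $A$ with constant $C\ge 0$. Let $x_0\in A$ and $h\in X$ with $\|h\|=1$ be such that there is $\delta_0>0$ with $x_0+th\in A$ for all $t\in(-\delta_0,\delta_0)$. Then the directional derivative $$F'(x_0;h):=\lim_{t\to0^+}\frac{F(x_0+th)-F(x_0)}{t}$$ exists, the limit being taken in the norm topology of $Y$.
   Context: For a convex cone $K\subset Y$, write $x\le_K y$ iff $y-x\in K$. A cone $K$ in a normed space $Y$ is normal if there is a constant $c>0$ such that $0\le_K x\le_K y$ implies $\|x\|\le c\|y\|$. A mapping $F:X\to Y$ is strongly $\alpha(\cdot)$-$k_0$ paraconvex on a convex set $A\subset X$ with constant $C\ge0$ (where $k_0\in K$) if for all $x_1,x_2\in A$ and all $\lambda\in[0,1]$, $$F(\lambda x_1+(1-\lambda)x_2)\le_K \lambda F(x_1)+(1-\lambda)F(x_2)+C\min\{\lambda,1-\lambda\}\,\alpha(\|x_1-x_2\|)\,k_0.$$ *)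

theory Defs
  imports "HOL-Analysis.Analysis"
begin

definition cone_le :: "'b::real_vector set \<Rightarrow> 'b \<Rightarrow> 'b \<Rightarrow> bool" where
  "cone_le K x y \<longleftrightarrow> y - x \<in> K"

definition normal_cone :: "'b::real_normed_vector set \<Rightarrow> bool" where
  "normal_cone K \<longleftrightarrow> (\<exists>c>0. \<forall>x y. cone_le K 0 x \<and> cone_le K x y \<longrightarrow> norm x \<le> c * norm y)"

definition weakly_Cauchy :: "(nat \<Rightarrow> 'b::real_normed_vector) \<Rightarrow> bool" where
  "weakly_Cauchy u \<longleftrightarrow> (\<forall>f::'b \<Rightarrow> real. bounded_linear f \<longrightarrow> Cauchy (\<lambda>n. f (u n)))"

definition weakly_converges_to :: "(nat \<Rightarrow> 'b::real_normed_vector) \<Rightarrow> 'b \<Rightarrow> bool" where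
  "weakly_converges_to u y \<longleftrightarrow> (\<forall>f::'b \<Rightarrow> real. bounded_linear f \<longrightarrow> (\<lambda>n. f (u n)) \<longlonglongrightarrow> f y)"

definition weakly_sequentially_complete :: "'b::real_normed_vector itself \<Rightarrow> bool" where
  "weakly_sequentially_complete TYPE('b) \<longleftrightarrow>
     (\<forall>u::nat \<Rightarrow> 'b. weakly_Cauchy u \<longrightarrow> (\<exists>y. weakly_converges_to u y))"

definition strongly_paraconvex ::
  "'b::real_normed_vector set \<Rightarrow> (real \<Rightarrow> real) \<Rightarrow> 'b \<Rightarrow> real \<Rightarrow> 'a::real_normed_vector set \<Rightarrow> ('a \<Rightarrow> 'b) \<Rightarrow> bool" where
  "strongly_paraconvex K \<alpha> k0 C A F \<longleftrightarrow>
     (\<forall>x1\<in>A. \<forall>x2\<in>A. \<forall>l\<in>{0..1}.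
        cone_le K (F (l *\<^sub>R x1 + (1 - l) *\<^sub>R x2))
          (l *\<^sub>R F x1 + (1 - l) *\<^sub>R F x2 + (C * min l (1 - l) * \<alpha> (norm (x1 - x2))) *\<^sub>R k0))"

end

theory Submission
  imports Defs
begin

text \<open>
  Write \<open>q t\<close> for the difference quotient at \<open>x0\<close> in direction \<open>h\<close>. Paraconvexity applied to
  \<open>x0\<close> and \<open>x0 + t h\<close> gives \<open>q s \<le> q t + (C \<alpha> t / t) k0\<close> for \<open>0 < s < t\<close>, and applied to
  \<open>x0 - \<sigma> h\<close> and \<open>x0 + t h\<close> it bounds \<open>q\<close> from below. Along a sequence \<open>s n \<down> 0\<close> on which the
  errors \<open>C \<alpha> (s n) / s n\<close> are summable, removing the accumulated errors makes \<open>q (s n)\<close>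
  monotone and order bounded. In a weakly sequentially complete space ordered by a closed normal
  cone such sequences converge in norm: they are weakly Cauchy, and by Mazur's lemma (a consequence
  of Hahn--Banach separation) the weak limit lies in the closed convex hull of every tail, which
  normality turns into norm convergence. Normality also transfers the limit from the
  sequence to all \<open>t \<rightarrow> 0+\<close>.
\<close>

section \<open>Cone order\<close>

lemma convex_cone_of_cone: "cone K \<Longrightarrow> convex K \<Longrightarrow> k \<in> K \<Longrightarrow> convex_cone K"
  by (metis convex_cone_def cone_def conic_def empty_iff)

lemma cone_le_trans:
  assumes "convex_cone K" "cone_le K x y" "cone_le K y z"
  shows "cone_le K x z"
  using convex_cone_add[OF assms(1) assms(3)[unfolded cone_le_def] assms(2)[unfolded cone_le_def]]
  by (simp add: cone_le_def)

lemma cone_le_increasing: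
  assumes K: "convex_cone K" and inc: "\<And>n. cone_le K (u n) (u (Suc n))" and "m \<le> n"
  shows "cone_le K (u m) (u n)"
  using \<open>m \<le> n\<close>
proof (induction n rule: dec_induct)
  case base
  show ?case using convex_cone_contains_0[OF K] by (simp add: cone_le_def)
next
  case (step n)
  then show ?case using cone_le_trans[OF K _ inc] by blast
qed

lemma normal_cone_sandwich:
  assumes "normal_cone K"
  obtains c where "c > 0"
    and "\<And>a z b. cone_le K a z \<Longrightarrow> cone_le K z b \<Longrightarrow> norm (z - a) \<le> c * norm (b - a)"
    and "\<And>a z b. cone_le K a z \<Longrightarrow> cone_le K z b \<Longrightarrow> norm (b - z) \<le> c * norm (b - a)"
proof -
  obtain c where "c > 0" and c: "\<And>x y. cone_le K 0 x \<Longrightarrow> cone_le K x y \<Longrightarrow> norm x \<le> c * norm y"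
    using assms unfolding normal_cone_def by blast
  show thesis
  proof
    show "norm (z - a) \<le> c * norm (b - a)" if "cone_le K a z" "cone_le K z b" for a z b
      using c[of "z - a" "b - a"] that by (simp add: cone_le_def)
    show "norm (b - z) \<le> c * norm (b - a)" if "cone_le K a z" "cone_le K z b" for a z b
      using c[of "b - z" "b - a"] that by (simp add: cone_le_def)
  qed fact
qed

section \<open>Hahn--Banach via Zorn's lemma\<close>

definition sublinear :: "('b::real_vector \<Rightarrow> real) \<Rightarrow> bool" where
  "sublinear p \<longleftrightarrow> (\<forall>x y. p (x + y) \<le> p x + p y) \<and> (\<forall>s x. 0 < s \<longrightarrow> p (s *\<^sub>R x) = s * p x)"

text \<open>Graphs of linear functionals on subspaces, dominated by \<open>p\<close>; Zorn's lemma runs over these.\<close>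

definition dominated_linear_graph :: "('b::real_vector \<Rightarrow> real) \<Rightarrow> ('b \<times> real) set \<Rightarrow> bool" where
  "dominated_linear_graph p G \<longleftrightarrow>
     subspace G \<and> (\<forall>x a b. (x, a) \<in> G \<longrightarrow> (x, b) \<in> G \<longrightarrow> a = b) \<and> (\<forall>x a. (x, a) \<in> G \<longrightarrow> a \<le> p x)"

lemma dominated_linear_graph_extension_value:
  assumes G: "dominated_linear_graph p G" and p: "sublinear p"
  obtains c where "\<And>m a t. (m, a) \<in> G \<Longrightarrow> a + t * c \<le> p (m + t *\<^sub>R x)"
proof -
  have sub: "subspace G" and dom: "\<And>m a. (m, a) \<in> G \<Longrightarrow> a \<le> p m"
    using G unfolding dominated_linear_graph_def by blast+
  have add: "p (y + z) \<le> p y + p z" and hom: "s > 0 \<Longrightarrow> p (s *\<^sub>R y) = s * p y" for y z s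
    using p unfolding sublinear_def by blast+
  have scale: "(s *\<^sub>R m, s * a) \<in> G" if "(m, a) \<in> G" for s m a
    using subspace_scale[OF sub that, of s] by simp
  have le: "a - p (m - x) \<le> p (m' + x) - a'" if "(m, a) \<in> G" "(m', a') \<in> G" for m a m' a'
  proof -
    have "a + a' \<le> p (m + m')" using dom subspace_add[OF sub that] by simp
    also have "\<dots> \<le> p (m - x) + p (m' + x)" using add[of "m - x" "m' + x"] by simp
    finally show ?thesis by simp
  qed
  \<comment> \<open>Any value between this supremum and the infimum of \<open>p (m' + x) - a'\<close> extends the functional.\<close>
  define c where "c = Sup {a - p (m - x) | m a. (m, a) \<in> G}"
  have G0: "(0, 0) \<in> G" using subspace_0[OF sub] by (simp add: zero_prod_def)
  have c_ge: "a - p (m - x) \<le> c" if "(m, a) \<in> G" for m a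
    unfolding c_def using that le[OF _ G0] by (intro cSup_upper) (auto simp: bdd_above_def)
  have c_le: "c \<le> p (m + x) - a" if "(m, a) \<in> G" for m a
    unfolding c_def using that le G0 by (intro cSup_least) auto
  have "a + t * c \<le> p (m + t *\<^sub>R x)" if ma: "(m, a) \<in> G" for m a t
  proof (cases t "0::real" rule: linorder_cases)
    case greater
    have "m + t *\<^sub>R x = t *\<^sub>R ((1 / t) *\<^sub>R m + x)" using greater by (simp add: scaleR_add_right)
    then have "p (m + t *\<^sub>R x) = t * p ((1 / t) *\<^sub>R m + x)" using hom[OF greater] by simp
    moreover have "t * c \<le> t * (p ((1 / t) *\<^sub>R m + x) - (1 / t) * a)"
      using c_le[OF scale[OF ma, of "1 / t"]] greater by (intro mult_left_mono) auto
    ultimately show ?thesis using greater by (simp add: right_diff_distrib)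
  next
    case less
    have "m + t *\<^sub>R x = (- t) *\<^sub>R ((1 / - t) *\<^sub>R m - x)" using less by (simp add: scaleR_diff_right)
    then have "p (m + t *\<^sub>R x) = (- t) * p ((1 / - t) *\<^sub>R m - x)" using hom[of "- t"] less by simp
    moreover have "(- t) * ((1 / - t) * a - p ((1 / - t) *\<^sub>R m - x)) \<le> (- t) * c"
      using c_ge[OF scale[OF ma, of "1 / - t"]] less by (intro mult_left_mono) auto
    ultimately show ?thesis using less by (simp add: right_diff_distrib)
  qed (use dom ma in simp)
  then show thesis using that by blast
qed

lemma dominated_linear_graph_extend:
  assumes G: "dominated_linear_graph p G" and p: "sublinear p" and x: "x \<notin> fst ` G"
  shows "\<exists>G'. dominated_linear_graph p G' \<and> G \<subset> G'"
proof -
  obtain c where c: "\<And>m a t. (m, a) \<in> G \<Longrightarrow> a + t * c \<le> p (m + t *\<^sub>R x)"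
    using dominated_linear_graph_extension_value[OF G p] by blast
  have sub: "subspace G" and single: "\<And>m a b. (m, a) \<in> G \<Longrightarrow> (m, b) \<in> G \<Longrightarrow> a = b"
    using G unfolding dominated_linear_graph_def by blast+
  define G' where "G' = {g + y | g y. g \<in> G \<and> y \<in> span {(x, c)}}"
  have mem_G': "(y, a) \<in> G' \<longleftrightarrow> (\<exists>m a' t. (m, a') \<in> G \<and> y = m + t *\<^sub>R x \<and> a = a' + t * c)"
    for y a
  proof
    assume "(y, a) \<in> G'"
    then obtain m a' t where "(m, a') \<in> G" "(y, a) = (m, a') + t *\<^sub>R (x, c)"
      unfolding G'_def span_singleton by auto
    then show "\<exists>m a' t. (m, a') \<in> G \<and> y = m + t *\<^sub>R x \<and> a = a' + t * c" by auto
  next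
    assume "\<exists>m a' t. (m, a') \<in> G \<and> y = m + t *\<^sub>R x \<and> a = a' + t * c"
    then obtain m a' t where "(m, a') \<in> G" "(y, a) = (m, a') + t *\<^sub>R (x, c)" by auto
    then show "(y, a) \<in> G'" unfolding G'_def span_singleton by blast
  qed
  have "subspace G'" unfolding G'_def by (intro subspace_sums sub subspace_span)
  moreover have "a = b" if y: "(y, a) \<in> G'" "(y, b) \<in> G'" for y a b
  proof -
    obtain m a' t m' b' t' where ya: "(m, a') \<in> G" "y = m + t *\<^sub>R x" "a = a' + t * c"
      and yb: "(m', b') \<in> G" "y = m' + t' *\<^sub>R x" "b = b' + t' * c"
      using y unfolding mem_G' by blast
    have "t = t'"
    proof (rule ccontr)
      assume "t \<noteq> t'"
      have "(1 / (t - t')) *\<^sub>R ((m', b') - (m, a')) \<in> G"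
        using subspace_scale[OF sub subspace_diff[OF sub yb(1) ya(1)]] .
      moreover have "m' - m = (t - t') *\<^sub>R x" using ya(2) yb(2) by (simp add: algebra_simps)
      ultimately have "x \<in> fst ` G" using \<open>t \<noteq> t'\<close> by (force simp: image_iff)
      with x show False ..
    qed
    then show ?thesis using ya yb single by auto
  qed
  moreover have "a \<le> p y" if "(y, a) \<in> G'" for y a
    using that c unfolding mem_G' by auto
  ultimately have "dominated_linear_graph p G'" unfolding dominated_linear_graph_def by blast
  moreover have "G \<subseteq> G'"
  proof (rule subrelI)
    fix m a assume "(m, a) \<in> G"
    then show "(m, a) \<in> G'"
      unfolding mem_G' by (intro exI[of _ m] exI[of _ a] exI[of _ "0::real"]) simp
  qed
  moreover have "(x, c) \<in> G'" unfolding mem_G' using subspace_0[OF sub]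
    by (intro exI[of _ 0] exI[of _ "0::real"] exI[of _ "1::real"]) (simp add: zero_prod_def)
  moreover have "(x, c) \<notin> G" using x by (metis fst_conv image_eqI)
  ultimately show ?thesis by blast
qed

lemma dominated_linear_graph_chain_Union:
  assumes C: "C \<in> chains {G. dominated_linear_graph p G \<and> G0 \<subseteq> G}" and "C \<noteq> {}"
  shows "dominated_linear_graph p (\<Union>C) \<and> G0 \<subseteq> \<Union>C"
proof -
  have sub: "\<And>G. G \<in> C \<Longrightarrow> subspace G"
    and single: "\<And>G x a b. G \<in> C \<Longrightarrow> (x, a) \<in> G \<Longrightarrow> (x, b) \<in> G \<Longrightarrow> a = b"
    and dom: "\<And>G x a. G \<in> C \<Longrightarrow> (x, a) \<in> G \<Longrightarrow> a \<le> p x"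
    and G0: "\<And>G. G \<in> C \<Longrightarrow> G0 \<subseteq> G"
    using C unfolding chains_def dominated_linear_graph_def by blast+
  have common: "\<exists>G\<in>C. u \<in> G \<and> v \<in> G" if "u \<in> \<Union>C" "v \<in> \<Union>C" for u v
    using that C unfolding chains_def chain_subset_def by blast
  obtain G1 where "G1 \<in> C" using \<open>C \<noteq> {}\<close> by blast
  have "subspace (\<Union>C)"
    unfolding subspace_def
  proof (intro conjI ballI allI)
    show "0 \<in> \<Union>C" using subspace_0[OF sub] \<open>G1 \<in> C\<close> by blast
    show "u + v \<in> \<Union>C" if "u \<in> \<Union>C" "v \<in> \<Union>C" for u v
      using common[OF that] subspace_add[OF sub] by blast
    show "c *\<^sub>R u \<in> \<Union>C" if "u \<in> \<Union>C" for c u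
      using that subspace_scale[OF sub] by blast
  qed
  moreover have "a = b" if "(x, a) \<in> \<Union>C" "(x, b) \<in> \<Union>C" for x a b
    using common[OF that] single by blast
  moreover have "a \<le> p x" if "(x, a) \<in> \<Union>C" for x a
    using that dom by blast
  ultimately show ?thesis
    using G0 \<open>G1 \<in> C\<close> unfolding dominated_linear_graph_def by blast
qed

lemma dominated_linear_graph_line:
  assumes p: "sublinear p"
  shows "dominated_linear_graph p (range (\<lambda>t. t *\<^sub>R (v, p v)))"
proof -
  have add: "p (y + z) \<le> p y + p z" and hom: "s > 0 \<Longrightarrow> p (s *\<^sub>R y) = s * p y" for y z s
    using p unfolding sublinear_def by blast+
  have p0: "p 0 = 0" using hom[of 2 0] by simp
  have dom: "t * p v \<le> p (t *\<^sub>R v)" for t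
  proof (cases t "0::real" rule: linorder_cases)
    case less
    have "- p v \<le> p (- v)" using add[of v "- v"] p0 by simp
    then have "t * p v \<le> (- t) * p (- v)"
      using mult_left_mono[of "- p v" "p (- v)" "- t"] less by simp
    also have "\<dots> = p (t *\<^sub>R v)" using hom[of "- t" "- v"] less by simp
    finally show ?thesis .
  qed (use hom p0 in auto)
  have "subspace (range (\<lambda>t. t *\<^sub>R (v, p v)))"
    using subspace_span[of "{(v, p v)}"] by (simp add: span_singleton)
  moreover have "a = b" if "(x, a) \<in> range (\<lambda>t. t *\<^sub>R (v, p v))" "(x, b) \<in> range (\<lambda>t. t *\<^sub>R (v, p v))"
    for x a b
    using that p0 by (auto dest: scaleR_cancel_right[THEN iffD1])
  moreover have "a \<le> p x" if "(x, a) \<in> range (\<lambda>t. t *\<^sub>R (v, p v))" for x a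
    using that dom by auto
  ultimately show ?thesis unfolding dominated_linear_graph_def by blast
qed

lemma dominated_linear_graph_maximal:
  assumes p: "sublinear p" and G0: "dominated_linear_graph p G0"
  obtains M where "dominated_linear_graph p M" "G0 \<subseteq> M" "fst ` M = UNIV"
proof -
  define A where "A = {G. dominated_linear_graph p G \<and> G0 \<subseteq> G}"
  have "\<forall>C\<in>chains A. \<exists>U\<in>A. \<forall>X\<in>C. X \<subseteq> U"
  proof
    fix C assume C: "C \<in> chains A"
    show "\<exists>U\<in>A. \<forall>X\<in>C. X \<subseteq> U"
    proof (cases "C = {}")
      case True
      then show ?thesis using G0 unfolding A_def by blast
    next
      case False
      then have "\<Union>C \<in> A"
        using dominated_linear_graph_chain_Union[OF C[unfolded A_def] False] unfolding A_def by blast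
      then show ?thesis by blast
    qed
  qed
  from Zorn_Lemma2[OF this] obtain M where "M \<in> A" and max: "\<forall>X\<in>A. M \<subseteq> X \<longrightarrow> X = M"
    by blast
  then have M: "dominated_linear_graph p M" "G0 \<subseteq> M" unfolding A_def by blast+
  have "x \<in> fst ` M" for x
  proof (rule ccontr)
    assume "x \<notin> fst ` M"
    then obtain G' where "dominated_linear_graph p G'" "M \<subset> G'"
      using dominated_linear_graph_extend[OF M(1) p] by blast
    with max M(2) show False unfolding A_def by blast
  qed
  with M show thesis using that by blast
qed

lemma sublinear_dominating_linear_functional:
  assumes p: "sublinear p"
  obtains f where "linear f" "\<And>x. f x \<le> p x" "f v = p v"
proof -
  obtain M where M: "dominated_linear_graph p M" "range (\<lambda>t. t *\<^sub>R (v, p v)) \<subseteq> M"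
    and total: "fst ` M = UNIV"
    using dominated_linear_graph_maximal[OF p dominated_linear_graph_line[OF p]] by blast
  then have sub: "subspace M" and single: "\<And>x a b. (x, a) \<in> M \<Longrightarrow> (x, b) \<in> M \<Longrightarrow> a = b"
    and dom: "\<And>x a. (x, a) \<in> M \<Longrightarrow> a \<le> p x"
    unfolding dominated_linear_graph_def by blast+
  define f where "f x = (THE a. (x, a) \<in> M)" for x
  have f_eq: "f x = a" if "(x, a) \<in> M" for x a
    unfolding f_def using that single by (blast intro: the_equality)
  have graph: "(x, f x) \<in> M" for x
  proof -
    obtain a where "(x, a) \<in> M" using total by (metis UNIV_I fst_conv imageE surj_pair)
    then show ?thesis using f_eq by simp
  qed
  show thesis
  proof
    show "linear f"
    proof (rule linearI)
      show "f (x + y) = f x + f y" for x y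
        using f_eq subspace_add[OF sub graph graph] by simp
      show "f (c *\<^sub>R x) = c *\<^sub>R f x" for c x
        using f_eq subspace_scale[OF sub graph] by simp
    qed
    show "f x \<le> p x" for x using dom graph .
    have "(v, p v) \<in> M" using M(2) rangeI[of "\<lambda>t. t *\<^sub>R (v, p v)" 1] by auto
    then show "f v = p v" using f_eq by blast
  qed
qed

section \<open>Separation of closed convex sets\<close>

definition minkowski_gauge :: "'b::real_vector set \<Rightarrow> 'b \<Rightarrow> real" where
  "minkowski_gauge V z = Inf {t. 0 < t \<and> z \<in> scaleR t ` V}"

lemma minkowski_gauge_le: "0 < t \<Longrightarrow> z \<in> scaleR t ` V \<Longrightarrow> minkowski_gauge V z \<le> t"
  unfolding minkowski_gauge_def by (rule cInf_lower) (auto simp: bdd_below_def intro: exI[of _ 0])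

lemma minkowski_gauge_le_1: "v \<in> V \<Longrightarrow> minkowski_gauge V v \<le> 1"
  by (rule minkowski_gauge_le) auto

context
  fixes V :: "'b::real_normed_vector set" and r :: real
  assumes r: "0 < r" and ball: "ball 0 r \<subseteq> V"
begin

private lemma mem_scaled: "0 < t \<Longrightarrow> norm z < t * r \<Longrightarrow> z \<in> scaleR t ` V"
  using ball by (intro image_eqI[of _ _ "(1 / t) *\<^sub>R z"]) (auto simp: field_simps)

private lemma minkowski_gauge_greatest:
  assumes "\<And>t. 0 < t \<Longrightarrow> z \<in> scaleR t ` V \<Longrightarrow> y \<le> t"
  shows "y \<le> minkowski_gauge V z"
proof -
  have "0 < norm z / r + 1" using r by (simp add: add_nonneg_pos)
  moreover have "norm z < (norm z / r + 1) * r" using r by (simp add: field_simps)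
  ultimately
  have "{t. 0 < t \<and> z \<in> scaleR t ` V} \<noteq> {}" using mem_scaled by blast
  then show ?thesis unfolding minkowski_gauge_def using assms by (auto intro: cInf_greatest)
qed

lemma minkowski_gauge_le_norm: "minkowski_gauge V z \<le> norm z / r"
proof (rule dense_ge)
  fix y assume "norm z / r < y"
  moreover have "0 \<le> norm z / r" using r by simp
  ultimately have "0 < y" by linarith
  with \<open>norm z / r < y\<close> show "minkowski_gauge V z \<le> y"
    using r by (intro minkowski_gauge_le mem_scaled) (auto simp: field_simps)
qed

lemma minkowski_gauge_ge_1:
  assumes "convex V" "z \<notin> V"
  shows "1 \<le> minkowski_gauge V z"
proof (rule minkowski_gauge_greatest, rule ccontr)
  fix t assume "0 < t" "z \<in> scaleR t ` V" "\<not> 1 \<le> t"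
  then obtain v where "v \<in> V" "z = t *\<^sub>R v" by auto
  moreover have "0 \<in> V" using ball r by auto
  ultimately have "z \<in> V"
    using convexD[OF \<open>convex V\<close> \<open>v \<in> V\<close> \<open>0 \<in> V\<close>, of t "1 - t"] \<open>0 < t\<close> \<open>\<not> 1 \<le> t\<close> by simp
  with \<open>z \<notin> V\<close> show False ..
qed

private lemma minkowski_gauge_scaleR_le:
  assumes "0 < s"
  shows "minkowski_gauge V (s *\<^sub>R z) \<le> s * minkowski_gauge V z"
proof -
  have "minkowski_gauge V (s *\<^sub>R z) / s \<le> minkowski_gauge V z"
  proof (rule minkowski_gauge_greatest)
    fix t assume "0 < t" "z \<in> scaleR t ` V"
    then have "s *\<^sub>R z \<in> scaleR (s * t) ` V" by auto
    then have "minkowski_gauge V (s *\<^sub>R z) \<le> s * t" using \<open>0 < s\<close> \<open>0 < t\<close> by (simp add: minkowski_gauge_le)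
    then show "minkowski_gauge V (s *\<^sub>R z) / s \<le> t" using \<open>0 < s\<close> by (simp add: field_simps)
  qed
  then show ?thesis using \<open>0 < s\<close> by (simp add: field_simps)
qed

private lemma minkowski_gauge_add_mem:
  assumes "convex V" "0 < t1" "z1 \<in> scaleR t1 ` V" "0 < t2" "z2 \<in> scaleR t2 ` V"
  shows "z1 + z2 \<in> scaleR (t1 + t2) ` V"
proof -
  obtain v1 v2 where v: "v1 \<in> V" "z1 = t1 *\<^sub>R v1" "v2 \<in> V" "z2 = t2 *\<^sub>R v2" using assms by auto
  define l where "l = t1 / (t1 + t2)"
  have l: "0 \<le> l" "l \<le> 1" "(t1 + t2) * l = t1" "(t1 + t2) * (1 - l) = t2"
    using assms by (auto simp: l_def field_simps)
  have "l *\<^sub>R v1 + (1 - l) *\<^sub>R v2 \<in> V" using \<open>convex V\<close> v l by (simp add: convex_def)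
  moreover have "z1 + z2 = (t1 + t2) *\<^sub>R (l *\<^sub>R v1 + (1 - l) *\<^sub>R v2)"
    using v l by (simp add: scaleR_add_right)
  ultimately show ?thesis by blast
qed

lemma sublinear_minkowski_gauge:
  assumes "convex V"
  shows "sublinear (minkowski_gauge V)"
  unfolding sublinear_def
proof (intro conjI allI impI)
  fix y z
  have "minkowski_gauge V (y + z) - minkowski_gauge V y \<le> minkowski_gauge V z"
  proof (rule minkowski_gauge_greatest)
    fix t2 assume t2: "0 < t2" "z \<in> scaleR t2 ` V"
    have "minkowski_gauge V (y + z) - t2 \<le> minkowski_gauge V y"
    proof (rule minkowski_gauge_greatest)
      fix t1 assume "0 < t1" "y \<in> scaleR t1 ` V"
      then have "y + z \<in> scaleR (t1 + t2) ` V"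
        using minkowski_gauge_add_mem[OF assms _ _ t2] by blast
      then have "minkowski_gauge V (y + z) \<le> t1 + t2"
        using minkowski_gauge_le[of "t1 + t2" "y + z" V] \<open>0 < t1\<close> t2(1) by simp
      then show "minkowski_gauge V (y + z) - t2 \<le> t1" by simp
    qed
    then show "minkowski_gauge V (y + z) - minkowski_gauge V y \<le> t2" by simp
  qed
  then show "minkowski_gauge V (y + z) \<le> minkowski_gauge V y + minkowski_gauge V z" by simp
next
  fix s :: real and z assume "0 < s"
  have "minkowski_gauge V z = minkowski_gauge V ((1 / s) *\<^sub>R (s *\<^sub>R z))" using \<open>0 < s\<close> by simp
  also have "\<dots> \<le> (1 / s) * minkowski_gauge V (s *\<^sub>R z)"
    using \<open>0 < s\<close> by (intro minkowski_gauge_scaleR_le) simp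
  finally show "minkowski_gauge V (s *\<^sub>R z) = s * minkowski_gauge V z"
    using minkowski_gauge_scaleR_le[OF \<open>0 < s\<close>, of z] \<open>0 < s\<close> by (simp add: field_simps)
qed

end

lemma convex_nbhd_separate_point:
  fixes V :: "'b::real_normed_vector set"
  assumes "convex V" "0 < r" "ball 0 r \<subseteq> V" "z \<notin> V"
  shows "\<exists>f :: 'b \<Rightarrow> real. bounded_linear f \<and> (\<forall>v\<in>V. f v \<le> 1) \<and> 1 \<le> f z"
proof -
  obtain f where "linear f" and f_le: "\<And>x. f x \<le> minkowski_gauge V x"
    and f_z: "f z = minkowski_gauge V z"
    using sublinear_dominating_linear_functional[OF sublinear_minkowski_gauge[OF assms(2,3,1)], where v = z]
    by blast
  have "\<bar>f x\<bar> \<le> norm x / r" for x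
    using f_le[of x] f_le[of "- x"] minkowski_gauge_le_norm[OF assms(2,3), of x]
      minkowski_gauge_le_norm[OF assms(2,3), of "- x"] linear_neg[OF \<open>linear f\<close>, of x]
    by (simp add: abs_le_iff)
  then have "bounded_linear f"
    using \<open>linear f\<close> by (intro bounded_linear_intro[of f "1 / r"]) (auto simp: linear_add linear_scale)
  moreover have "\<forall>v\<in>V. f v \<le> 1" using f_le minkowski_gauge_le_1 order_trans by fast
  moreover have "1 \<le> f z" using f_z minkowski_gauge_ge_1[OF assms(2,3,1,4)] by simp
  ultimately show ?thesis by blast
qed

lemma closed_convex_separate_origin:
  fixes C :: "'b::real_normed_vector set"
  assumes "convex C" "closed C" "0 \<notin> C" "c0 \<in> C"
  shows "\<exists>(f :: 'b \<Rightarrow> real) \<theta>. bounded_linear f \<and> 0 < \<theta> \<and> (\<forall>c\<in>C. f c \<le> - \<theta>)"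
proof -
  obtain d where "0 < d" and d: "ball 0 d \<subseteq> - C"
    using assms(2,3) open_contains_ball[of "- C"] by auto
  \<comment> \<open>\<open>C - c0\<close> thickened by a ball: a convex neighbourhood of \<open>0\<close> that misses \<open>- c0\<close>.\<close>
  define V where "V = (\<Union>c\<in>C. \<Union>w\<in>ball (- c0) d. {c + w})"
  have "convex V" unfolding V_def using convex_sums[OF \<open>convex C\<close> convex_ball] .
  have ball_V: "ball 0 d \<subseteq> V"
  proof
    fix z :: 'b assume "z \<in> ball 0 d"
    then have "z - c0 \<in> ball (- c0) d" by (simp add: dist_norm)
    then have "c0 + (z - c0) \<in> V" unfolding V_def by (intro UN_I[OF \<open>c0 \<in> C\<close>] UN_I) auto
    then show "z \<in> V" by simp
  qed
  have "- c0 \<notin> V"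
  proof
    assume "- c0 \<in> V"
    then obtain c w where "c \<in> C" "w \<in> ball (- c0) d" "- c0 = c + w" unfolding V_def by blast
    then have "c = - c0 - w" by (simp add: algebra_simps)
    with \<open>w \<in> ball (- c0) d\<close> have "c \<in> ball 0 d"
      using norm_minus_commute[of "- c0" w] by (simp add: dist_norm)
    with d \<open>c \<in> C\<close> show False by blast
  qed
  obtain f :: "'b \<Rightarrow> real" where f: "bounded_linear f" and f_V: "\<forall>v\<in>V. f v \<le> 1"
    and f_c0: "1 \<le> f (- c0)"
    using convex_nbhd_separate_point[OF \<open>convex V\<close> \<open>0 < d\<close> ball_V \<open>- c0 \<notin> V\<close>] by blast
  have "c0 \<noteq> 0" using assms(3,4) by blast
  define \<theta> where "\<theta> = d / (2 * norm c0)"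
  have "0 < \<theta>" using \<open>0 < d\<close> \<open>c0 \<noteq> 0\<close> by (simp add: \<theta>_def)
  have "f c \<le> - \<theta>" if "c \<in> C" for c
  proof -
    have "- c0 - (1 + \<theta>) *\<^sub>R (- c0) = \<theta> *\<^sub>R c0" by (simp add: algebra_simps)
    then have "dist (- c0) ((1 + \<theta>) *\<^sub>R (- c0)) = \<theta> * norm c0"
      using \<open>0 < \<theta>\<close> by (simp add: dist_norm)
    also have "\<dots> < d" using \<open>0 < d\<close> \<open>c0 \<noteq> 0\<close> by (simp add: \<theta>_def)
    finally have "c + (1 + \<theta>) *\<^sub>R (- c0) \<in> V"
      unfolding V_def by (intro UN_I[OF that] UN_I[of "(1 + \<theta>) *\<^sub>R (- c0)"]) simp_all
    then have "f (c + (1 + \<theta>) *\<^sub>R (- c0)) \<le> 1" using f_V by blast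
    moreover have "f (c + (1 + \<theta>) *\<^sub>R (- c0)) = f c + (1 + \<theta>) * f (- c0)"
      by (simp only: linear_add[OF bounded_linear.linear[OF f]] linear_scale[OF bounded_linear.linear[OF f]]
          real_scaleR_def)
    ultimately have "f c + (1 + \<theta>) * f (- c0) \<le> 1" by simp
    moreover have "1 + \<theta> \<le> (1 + \<theta>) * f (- c0)"
      using \<open>0 < \<theta>\<close> f_c0 mult_left_mono[of 1 "f (- c0)" "1 + \<theta>"] by simp
    ultimately show ?thesis by linarith
  qed
  then show ?thesis using f \<open>0 < \<theta>\<close> by blast
qed

lemma closed_convex_separate_point:
  fixes S :: "'b::real_normed_vector set"
  assumes "convex S" "closed S" "y \<notin> S" "s0 \<in> S"
  shows "\<exists>(f :: 'b \<Rightarrow> real) \<theta>. bounded_linear f \<and> 0 < \<theta> \<and> (\<forall>s\<in>S. f s \<le> f y - \<theta>)"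
proof -
  have "convex ((\<lambda>s. s - y) ` S)" "closed ((\<lambda>s. s - y) ` S)" "0 \<notin> (\<lambda>s. s - y) ` S"
    using assms(1-3) closed_translation_subtract by auto
  then obtain f :: "'b \<Rightarrow> real" and \<theta> where f: "bounded_linear f" "0 < \<theta>"
    and sep: "\<forall>c\<in>(\<lambda>s. s - y) ` S. f c \<le> - \<theta>"
    using closed_convex_separate_origin assms(4) by (metis imageI)
  have "f s \<le> f y - \<theta>" if "s \<in> S" for s
    using sep that linear_diff[OF bounded_linear.linear[OF f(1)]] by force
  then show ?thesis using f by blast
qed

section \<open>Monotone convergence in a normal cone\<close>

lemma convex_cone_sum:
  assumes "convex_cone K" "\<And>i. i \<in> I \<Longrightarrow> d i \<in> K"
  shows "sum d I \<in> K"
  using assms(2)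
proof (induction I rule: infinite_finite_induct)
  case (insert i I)
  then show ?case using convex_cone_add[OF assms(1)] by simp
qed (use convex_cone_contains_0[OF assms(1)] in simp_all)

lemma summable_of_bounded_finite_subsums:
  fixes a :: "nat \<Rightarrow> real"
  assumes bound: "\<And>S N. S \<subseteq> {..<N} \<Longrightarrow> \<bar>sum a S\<bar> \<le> R"
  shows "summable a"
proof -
  have partial: "(\<Sum>k<N. \<bar>a k\<bar>) \<le> 2 * R" for N
  proof -
    have "(\<Sum>k<N. \<bar>a k\<bar>) = (\<Sum>k<N. if 0 \<le> a k then a k else - a k)"
      by (rule sum.cong) auto
    also have "\<dots> = sum a ({..<N} \<inter> {k. 0 \<le> a k}) - sum a ({..<N} \<inter> - {k. 0 \<le> a k})"
      by (simp add: sum.If_cases sum_negf)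
    also have "\<dots> \<le> R + R"
      using bound[of "{..<N} \<inter> {k. 0 \<le> a k}" N] bound[of "{..<N} \<inter> - {k. 0 \<le> a k}" N]
      by (simp add: abs_le_iff)
    finally show ?thesis by simp
  qed
  have "(\<Sum>k\<le>n. \<bar>a k\<bar>) \<le> 2 * R" for n
    using partial[of "Suc n"] by (simp only: lessThan_Suc_atMost)
  then have "summable (\<lambda>k. \<bar>a k\<bar>)" by (intro bounded_imp_summable) auto
  then show ?thesis by (rule summable_rabs_cancel)
qed

lemma increasing_order_bounded_weakly_Cauchy:
  fixes u :: "nat \<Rightarrow> 'b::real_normed_vector"
  assumes K: "convex_cone K" and normal: "normal_cone K"
    and inc: "\<And>n. cone_le K (u n) (u (Suc n))" and bound: "\<And>n. cone_le K (u n) B"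
  shows "weakly_Cauchy u"
  unfolding weakly_Cauchy_def
proof (intro allI impI)
  fix f :: "'b \<Rightarrow> real" assume f: "bounded_linear f"
  obtain c where c: "\<And>a z b. cone_le K a z \<Longrightarrow> cone_le K z b \<Longrightarrow> norm (z - a) \<le> c * norm (b - a)"
    using normal_cone_sandwich[OF normal] by metis
  obtain M where M: "\<And>x. norm (f x) \<le> norm x * M" "0 < M"
    using bounded_linear.pos_bounded[OF f] by blast
  define d where "d k = u (Suc k) - u k" for k
  have d_K: "d k \<in> K" for k using inc unfolding d_def cone_le_def by simp
  have telescope: "sum d {..<n} = u n - u 0" for n unfolding d_def by (rule sum_lessThan_telescope)
  \<comment> \<open>Normality bounds all subsums of the increments uniformly, so \<open>f (d k)\<close> is absolutely summable.\<close>
  have "\<bar>\<Sum>k\<in>S. f (d k)\<bar> \<le> c * norm (B - u 0) * M" if S: "S \<subseteq> {..<N}" for S N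
  proof -
    have "cone_le K (u 0) (u 0 + sum d S)"
      using convex_cone_sum[of K S d, OF K d_K] by (simp add: cone_le_def)
    moreover have "B - (u 0 + sum d S) = (B - u N) + sum d ({..<N} - S)"
      using sum.subset_diff[OF S finite_lessThan, of d] telescope[of N] by (simp add: algebra_simps)
    then have "cone_le K (u 0 + sum d S) B"
      unfolding cone_le_def
      by (metis convex_cone_add[OF K bound[of N, unfolded cone_le_def]
          convex_cone_sum[of K "{..<N} - S" d, OF K d_K]])
    ultimately have "norm (u 0 + sum d S - u 0) \<le> c * norm (B - u 0)" by (rule c)
    then have "norm (sum d S) \<le> c * norm (B - u 0)" by simp
    then have "norm (sum d S) * M \<le> c * norm (B - u 0) * M" using M(2) by simp
    moreover have "(\<Sum>k\<in>S. f (d k)) = f (sum d S)"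
      by (simp add: linear_sum[OF bounded_linear.linear[OF f]])
    ultimately show ?thesis using M(1)[of "sum d S"] by simp
  qed
  then have "summable (\<lambda>k. f (d k))" by (rule summable_of_bounded_finite_subsums)
  then have "(\<lambda>n. f (u 0) + (\<Sum>k<n. f (d k))) \<longlonglongrightarrow> f (u 0) + (\<Sum>k. f (d k))"
    by (intro tendsto_add tendsto_const summable_LIMSEQ)
  moreover have "f (u 0) + (\<Sum>k<n. f (d k)) = f (u n)" for n
    using linear_sum[OF bounded_linear.linear[OF f], of d "{..<n}"] telescope[of n]
      linear_diff[OF bounded_linear.linear[OF f]] by simp
  ultimately show "Cauchy (\<lambda>n. f (u n))" by (simp add: LIMSEQ_imp_Cauchy)
qed

lemma weakly_converges_to_mem_closure_convex_hull:
  fixes u :: "nat \<Rightarrow> 'b::real_normed_vector"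
  assumes "weakly_converges_to u y"
  shows "y \<in> closure (convex hull (u ` {n..}))"
proof (rule ccontr)
  let ?S = "closure (convex hull (u ` {n..}))"
  assume "y \<notin> ?S"
  have mem: "u m \<in> ?S" if "n \<le> m" for m
    using that closure_subset hull_subset by fastforce
  obtain f :: "'b \<Rightarrow> real" and \<theta> where f: "bounded_linear f" "0 < \<theta>" "\<forall>s\<in>?S. f s \<le> f y - \<theta>"
    using closed_convex_separate_point[OF convex_closure[OF convex_convex_hull] closed_closure
        \<open>y \<notin> ?S\<close> mem[OF order_refl]] by blast
  have "(\<lambda>m. f (u m)) \<longlonglongrightarrow> f y" using assms f(1) unfolding weakly_converges_to_def by blast
  then have "eventually (\<lambda>m. f y - \<theta> < f (u m)) sequentially"
    using f(2) by (intro order_tendstoD(1)) auto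
  moreover have "eventually (\<lambda>m. n \<le> m) sequentially" by (rule eventually_ge_at_top)
  ultimately obtain m where "n \<le> m" "f y - \<theta> < f (u m)"
    using eventually_happens'[OF sequentially_bot eventually_conj] by blast
  with f(3) mem show False by force
qed

lemma increasing_le_weak_limit:
  fixes u :: "nat \<Rightarrow> 'b::real_normed_vector"
  assumes K: "convex_cone K" "closed K" and inc: "\<And>n. cone_le K (u n) (u (Suc n))"
    and y: "weakly_converges_to u y"
  shows "cone_le K (u n) y"
proof -
  have "u ` {n..} \<subseteq> (+) (u n) ` K"
  proof
    fix z assume "z \<in> u ` {n..}"
    then obtain m where "n \<le> m" "z = u n + (u m - u n)" by auto
    then show "z \<in> (+) (u n) ` K"
      using cone_le_increasing[of K u, OF K(1) inc] unfolding cone_le_def by blast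
  qed
  moreover have "convex ((+) (u n) ` K)"
    using convex_translation[of K "u n"] K(1) unfolding convex_cone_def by blast
  ultimately have "convex hull (u ` {n..}) \<subseteq> (+) (u n) ` K" by (rule hull_minimal)
  then have "closure (convex hull (u ` {n..})) \<subseteq> (+) (u n) ` K"
    using closed_translation[OF K(2)] by (rule closure_minimal)
  then obtain k where "k \<in> K" "y = u n + k"
    using weakly_converges_to_mem_closure_convex_hull[OF y, of n] by blast
  then show ?thesis unfolding cone_le_def by simp
qed

lemma increasing_eventually_above_convex_hull:
  assumes K: "convex_cone K" and inc: "\<And>n. cone_le K (u n) (u (Suc n))"
    and z: "z \<in> convex hull (range u)"
  shows "eventually (\<lambda>m. cone_le K z (u m)) sequentially"
proof -
  let ?E = "{z. eventually (\<lambda>m. cone_le K z (u m)) sequentially}"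
  have "convex ?E"
  proof (rule convexI)
    fix z1 z2 and a b :: real
    assume z: "z1 \<in> ?E" "z2 \<in> ?E" and ab: "0 \<le> a" "0 \<le> b" "a + b = 1"
    have "u m - (a *\<^sub>R z1 + b *\<^sub>R z2) = a *\<^sub>R (u m - z1) + b *\<^sub>R (u m - z2)" for m
      using ab by (simp add: algebra_simps flip: scaleR_add_left)
    moreover have "convex K" using K unfolding convex_cone_def by blast
    ultimately have "cone_le K (a *\<^sub>R z1 + b *\<^sub>R z2) (u m)"
      if "cone_le K z1 (u m)" "cone_le K z2 (u m)" for m
      using that ab unfolding cone_le_def by (simp add: convexD)
    then show "a *\<^sub>R z1 + b *\<^sub>R z2 \<in> ?E"
      using eventually_conj[OF z[simplified]] by (auto elim: eventually_mono)
  qed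
  moreover have "range u \<subseteq> ?E"
  proof
    fix z assume "z \<in> range u"
    then obtain n where "z = u n" by blast
    then show "z \<in> ?E"
      using eventually_mono[OF eventually_ge_at_top[of n], of "\<lambda>m. cone_le K z (u m)"]
        cone_le_increasing[of K u, OF K inc] by simp
  qed
  ultimately have "convex hull (range u) \<subseteq> ?E" by (intro hull_minimal)
  then show ?thesis using z by blast
qed

lemma increasing_order_bounded_convergent:
  fixes u :: "nat \<Rightarrow> 'b::banach"
  assumes wsc: "weakly_sequentially_complete TYPE('b)"
    and K: "convex_cone K" "closed K" and normal: "normal_cone K"
    and inc: "\<And>n. cone_le K (u n) (u (Suc n))" and bound: "\<And>n. cone_le K (u n) B"
  shows "convergent u"
proof -
  obtain y where y: "weakly_converges_to u y"
    using wsc increasing_order_bounded_weakly_Cauchy[of K u B, OF K(1) normal inc bound]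
    unfolding weakly_sequentially_complete_def by blast
  obtain c where "0 < c"
    and c: "\<And>a z b. cone_le K a z \<Longrightarrow> cone_le K z b \<Longrightarrow> norm (b - z) \<le> c * norm (b - a)"
    using normal_cone_sandwich[OF normal] by metis
  have "u \<longlonglongrightarrow> y"
  proof (rule LIMSEQ_I)
    fix r :: real assume "0 < r"
    have "y \<in> closure (convex hull (range u))"
      using weakly_converges_to_mem_closure_convex_hull[OF y, of 0] by simp
    then obtain z where z: "z \<in> convex hull (range u)" "dist z y < r / c"
      using \<open>0 < r\<close> \<open>0 < c\<close> unfolding closure_approachable by (meson divide_pos_pos)
    obtain N where N: "\<forall>m\<ge>N. cone_le K z (u m)"
      using increasing_eventually_above_convex_hull[OF K(1) inc z(1)] unfolding eventually_sequentially
      by blast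
    have "norm (u m - y) < r" if "N \<le> m" for m
    proof -
      have "norm (y - u m) \<le> c * norm (y - z)"
        using N that increasing_le_weak_limit[OF K inc y] by (intro c) auto
      also have "\<dots> < r" using z(2) \<open>0 < c\<close> by (simp add: dist_norm norm_minus_commute field_simps)
      finally show ?thesis by (simp add: norm_minus_commute)
    qed
    then show "\<exists>N. \<forall>m\<ge>N. norm (u m - y) < r" by blast
  qed
  then show ?thesis unfolding convergent_def by blast
qed

section \<open>Almost increasing functions\<close>

lemma null_sequence_with_summable_values:
  fixes e :: "real \<Rightarrow> real"
  assumes e: "(e \<longlongrightarrow> 0) (at_right 0)" and "0 < \<delta>"
  obtains s where "\<And>n. 0 < s n" "\<And>n. s n < \<delta>" "\<And>n. s (Suc n) < s n" "s \<longlonglongrightarrow> 0"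
    "summable (\<lambda>n. e (s n))"
proof -
  define P where "P n x \<longleftrightarrow> 0 < x \<and> x < \<delta> * (1/2) ^ n \<and> \<bar>e x\<bar> < (1/2) ^ n" for n x
  have smaller: "\<exists>y. P n y \<and> y < x" if "0 < x" for n x
  proof -
    have "eventually (\<lambda>y. dist (e y) 0 < (1/2) ^ n) (at_right 0)" by (rule tendstoD[OF e]) simp
    moreover have "eventually (\<lambda>y. 0 < y \<and> y < min x (\<delta> * (1/2) ^ n)) (at_right (0::real))"
      using that \<open>0 < \<delta>\<close> unfolding eventually_at_right_field by (intro exI[of _ "min x (\<delta> * (1/2) ^ n)"]) auto
    ultimately have "eventually (\<lambda>y. P n y \<and> y < x) (at_right 0)"
      unfolding P_def by eventually_elim auto
    then show ?thesis by (rule eventually_happens'[rotated]) simp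
  qed
  have "\<exists>s. \<forall>n. P n (s n) \<and> s (Suc n) < s n"
  proof (rule dependent_nat_choice)
    show "\<exists>x. P 0 x" using smaller[of 1] by auto
    show "\<exists>y. P (Suc n) y \<and> y < x" if "P n x" for x n
      using that smaller unfolding P_def by blast
  qed
  then obtain s where s: "\<And>n. P n (s n) \<and> s (Suc n) < s n" by blast
  have pos: "0 < s n" and small: "s n < \<delta> * (1/2) ^ n" and e_small: "\<bar>e (s n)\<bar> < (1/2) ^ n" for n
    using s[of n] unfolding P_def by auto
  show thesis
  proof
    show "0 < s n" for n by (rule pos)
    show "s n < \<delta>" for n
    proof -
      have "\<delta> * (1/2) ^ n \<le> \<delta>" using \<open>0 < \<delta>\<close> by (intro mult_left_le) (auto simp: power_le_one)
      then show ?thesis using small[of n] by linarith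
    qed
    show "s (Suc n) < s n" for n using s by blast
    have "(\<lambda>n. \<delta> * (1/2::real) ^ n) \<longlonglongrightarrow> 0" by (intro tendsto_mult_right_zero LIMSEQ_power_zero) simp
    then show "s \<longlonglongrightarrow> 0"
      using pos small
      by (intro tendsto_sandwich[of "\<lambda>n. 0" s _ "\<lambda>n. \<delta> * (1/2) ^ n"] always_eventually allI)
        (auto intro: less_imp_le)
    show "summable (\<lambda>n. e (s n))"
      using e_small by (intro summable_comparison_test[OF _ summable_geometric[of "1/2"]]) (auto intro: less_imp_le)
  qed
qed

lemma almost_increasing_limit_estimate:
  fixes q :: "real \<Rightarrow> 'b::real_normed_vector"
  assumes c: "\<And>a z b. cone_le K a z \<Longrightarrow> cone_le K z b \<Longrightarrow> norm (z - a) \<le> c * norm (b - a)"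
    and "0 \<le> c"
    and mono: "\<And>s t. 0 < s \<Longrightarrow> s < t \<Longrightarrow> t < \<delta> \<Longrightarrow> cone_le K (q s) (q t + e t *\<^sub>R k0)"
    and s: "\<And>n. 0 < s n" "\<And>n. s n < \<delta>" "s \<longlonglongrightarrow> 0" and qs: "(\<lambda>n. q (s n)) \<longlonglongrightarrow> L"
    and t: "0 < t" "t < s n"
  shows "norm (q t - L) \<le> c * (norm (q (s n) - L) + (\<bar>e (s n)\<bar> + \<bar>e t\<bar>) * norm k0) + \<bar>e t\<bar> * norm k0"
proof -
  let ?z = "q t + e t *\<^sub>R k0" and ?b = "q (s n) + (e (s n) + e t) *\<^sub>R k0"
  have key: "norm (?z - L) \<le> c * norm (?b - L)"
  proof (rule tendsto_le[OF trivial_limit_sequentially])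
    show "(\<lambda>m. c * norm (?b - q (s m))) \<longlonglongrightarrow> c * norm (?b - L)" by (intro tendsto_intros qs)
    show "(\<lambda>m. norm (?z - q (s m))) \<longlonglongrightarrow> norm (?z - L)" by (intro tendsto_intros qs)
    have "eventually (\<lambda>m. s m < t) sequentially" using order_tendstoD(2)[OF s(3) \<open>0 < t\<close>] .
    then show "eventually (\<lambda>m. norm (?z - q (s m)) \<le> c * norm (?b - q (s m))) sequentially"
    proof (rule eventually_mono)
      fix m assume "s m < t"
      then have "cone_le K (q (s m)) ?z" using mono s(1,2) t by (meson less_trans)
      moreover have "cone_le K ?z ?b"
        using mono[OF t s(2)] unfolding cone_le_def by (simp add: algebra_simps scaleR_add_left)
      ultimately show "norm (?z - q (s m)) \<le> c * norm (?b - q (s m))" by (rule c)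
    qed
  qed
  have b_bound: "norm (?b - L) \<le> norm (q (s n) - L) + (\<bar>e (s n)\<bar> + \<bar>e t\<bar>) * norm k0"
  proof -
    have "norm (?b - L) \<le> norm (q (s n) - L) + norm ((e (s n) + e t) *\<^sub>R k0)"
      using norm_triangle_ineq[of "q (s n) - L" "(e (s n) + e t) *\<^sub>R k0"] by (simp only: diff_add_eq)
    also have "\<dots> \<le> norm (q (s n) - L) + (\<bar>e (s n)\<bar> + \<bar>e t\<bar>) * norm k0"
      using mult_right_mono[OF abs_triangle_ineq[of "e (s n)" "e t"] norm_ge_zero[of k0]] by simp
    finally show ?thesis .
  qed
  have "norm (q t - L) \<le> norm (?z - L) + \<bar>e t\<bar> * norm k0"
    using norm_triangle_ineq4[of "?z - L" "e t *\<^sub>R k0"] by simp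
  also have "\<dots> \<le> c * norm (?b - L) + \<bar>e t\<bar> * norm k0" using key by simp
  also have "\<dots> \<le> c * (norm (q (s n) - L) + (\<bar>e (s n)\<bar> + \<bar>e t\<bar>) * norm k0) + \<bar>e t\<bar> * norm k0"
    using b_bound \<open>0 \<le> c\<close> by (simp add: mult_left_mono)
  finally show ?thesis .
qed

lemma almost_increasing_tendsto_at_right:
  fixes q :: "real \<Rightarrow> 'b::real_normed_vector"
  assumes normal: "normal_cone K"
    and mono: "\<And>s t. 0 < s \<Longrightarrow> s < t \<Longrightarrow> t < \<delta> \<Longrightarrow> cone_le K (q s) (q t + e t *\<^sub>R k0)"
    and e: "(e \<longlongrightarrow> 0) (at_right 0)"
    and s: "\<And>n. 0 < s n" "\<And>n. s n < \<delta>" "s \<longlonglongrightarrow> 0" and qs: "(\<lambda>n. q (s n)) \<longlonglongrightarrow> L"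
  shows "(q \<longlongrightarrow> L) (at_right 0)"
proof -
  obtain c where "0 < c"
    and c: "\<And>a z b. cone_le K a z \<Longrightarrow> cone_le K z b \<Longrightarrow> norm (z - a) \<le> c * norm (b - a)"
    using normal_cone_sandwich[OF normal] by metis
  have "filterlim s (at_right 0) sequentially"
    using s(1) by (intro tendsto_imp_filterlim_at_right[OF s(3)]) simp
  then have "(\<lambda>n. e (s n)) \<longlonglongrightarrow> 0" by (rule filterlim_compose[OF e])
  then have g: "(\<lambda>n. c * (norm (q (s n) - L) + \<bar>e (s n)\<bar> * norm k0)) \<longlonglongrightarrow> 0"
    using qs by (auto intro!: tendsto_eq_intros simp: LIM_zero_iff)
  have e': "((\<lambda>t. (c + 1) * \<bar>e t\<bar> * norm k0) \<longlongrightarrow> 0) (at_right 0)"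
    using e by (auto intro!: tendsto_eq_intros simp: tendsto_rabs_zero_iff)
  show ?thesis
    unfolding tendsto_iff
  proof (intro allI impI)
    fix \<epsilon> :: real assume "0 < \<epsilon>"
    then have "eventually (\<lambda>n. c * (norm (q (s n) - L) + \<bar>e (s n)\<bar> * norm k0) < \<epsilon> / 2) sequentially"
      by (intro order_tendstoD(2)[OF g]) simp
    then obtain n where n: "c * (norm (q (s n) - L) + \<bar>e (s n)\<bar> * norm k0) < \<epsilon> / 2"
      using eventually_happens'[OF sequentially_bot] by blast
    have "eventually (\<lambda>t. (c + 1) * \<bar>e t\<bar> * norm k0 < \<epsilon> / 2) (at_right 0)"
      using \<open>0 < \<epsilon>\<close> by (intro order_tendstoD(2)[OF e']) simp
    moreover have "eventually (\<lambda>t. 0 < t \<and> t < s n) (at_right (0::real))"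
      using s(1)[of n] unfolding eventually_at_right_field by auto
    ultimately show "eventually (\<lambda>t. dist (q t) L < \<epsilon>) (at_right 0)"
    proof eventually_elim
      case (elim t)
      then have "norm (q t - L)
          \<le> c * (norm (q (s n) - L) + (\<bar>e (s n)\<bar> + \<bar>e t\<bar>) * norm k0) + \<bar>e t\<bar> * norm k0"
        using \<open>0 < c\<close> by (intro almost_increasing_limit_estimate[OF c _ mono s qs]) auto
      also have "\<dots> < \<epsilon>" using n elim by (simp add: algebra_simps)
      finally show ?case by (simp add: dist_norm)
    qed
  qed
qed

lemma almost_increasing_bounded_below_has_limit_at_right:
  fixes q :: "real \<Rightarrow> 'b::banach"
  assumes wsc: "weakly_sequentially_complete TYPE('b)"
    and K: "convex_cone K" "closed K" and normal: "normal_cone K" and k0: "k0 \<in> K" and "0 < \<delta>"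
    and mono: "\<And>s t. 0 < s \<Longrightarrow> s < t \<Longrightarrow> t < \<delta> \<Longrightarrow> cone_le K (q s) (q t + e t *\<^sub>R k0)"
    and lower: "\<And>t. 0 < t \<Longrightarrow> t < \<delta> \<Longrightarrow> cone_le K b (q t)"
    and e: "(e \<longlongrightarrow> 0) (at_right 0)" and e_nonneg: "\<And>t. 0 < t \<Longrightarrow> 0 \<le> e t"
  shows "\<exists>L. (q \<longlongrightarrow> L) (at_right 0)"
proof -
  obtain s where s: "\<And>n. 0 < s n" "\<And>n. s n < \<delta>" "\<And>n. s (Suc n) < s n" "s \<longlonglongrightarrow> 0"
    and summable: "summable (\<lambda>n. e (s n))"
    using null_sequence_with_summable_values[OF e \<open>0 < \<delta>\<close>] by metis
  define E where "E n = (\<Sum>k<n. e (s k))" for n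
  \<comment> \<open>Removing the accumulated errors makes \<open>q (s n)\<close> decreasing; \<open>u\<close> is its negative.\<close>
  define u where "u n = E n *\<^sub>R k0 - q (s n)" for n
  have "cone_le K (u n) (u (Suc n))" for n
  proof -
    have "u (Suc n) - u n = q (s n) + e (s n) *\<^sub>R k0 - q (s (Suc n))"
      by (simp add: u_def E_def algebra_simps)
    then show ?thesis using mono[OF s(1) s(3) s(2)] unfolding cone_le_def by simp
  qed
  moreover have "cone_le K (u n) (suminf (\<lambda>n. e (s n)) *\<^sub>R k0 - b)" for n
  proof -
    have "E n \<le> suminf (\<lambda>n. e (s n))"
      unfolding E_def using summable e_nonneg s(1) by (intro sum_le_suminf) auto
    then have "(suminf (\<lambda>n. e (s n)) - E n) *\<^sub>R k0 + (q (s n) - b) \<in> K"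
      using lower[OF s(1,2)] K(1) k0 unfolding cone_le_def by (simp add: convex_cone_add convex_cone_scaleR)
    then show ?thesis by (simp add: cone_le_def u_def algebra_simps)
  qed
  ultimately obtain U where U: "u \<longlonglongrightarrow> U"
    using increasing_order_bounded_convergent[where u = u, OF wsc K normal] unfolding convergent_def
    by blast
  have "(\<lambda>n. E n *\<^sub>R k0 - u n) \<longlonglongrightarrow> suminf (\<lambda>n. e (s n)) *\<^sub>R k0 - U"
    unfolding E_def by (intro tendsto_intros summable_LIMSEQ summable U)
  then have "(\<lambda>n. q (s n)) \<longlonglongrightarrow> suminf (\<lambda>n. e (s n)) *\<^sub>R k0 - U" by (simp add: u_def)
  then show ?thesis using almost_increasing_tendsto_at_right[OF normal mono e s(1,2,4)] by blast
qed

section \<open>Difference quotients of strongly paraconvex maps\<close>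

lemma strongly_paraconvex_le_weighted:
  assumes para: "strongly_paraconvex K \<alpha> k0 C A F" and K: "convex_cone K" and k0: "k0 \<in> K"
    and "0 \<le> C" and "0 \<le> \<alpha> (norm (x1 - x2))" and "x1 \<in> A" "x2 \<in> A" "0 \<le> l" "l \<le> 1"
  shows "cone_le K (F (l *\<^sub>R x1 + (1 - l) *\<^sub>R x2))
    (l *\<^sub>R F x1 + (1 - l) *\<^sub>R F x2 + (C * l * \<alpha> (norm (x1 - x2))) *\<^sub>R k0)"
proof -
  let ?a = "\<alpha> (norm (x1 - x2))"
  have "cone_le K (F (l *\<^sub>R x1 + (1 - l) *\<^sub>R x2))
      (l *\<^sub>R F x1 + (1 - l) *\<^sub>R F x2 + (C * min l (1 - l) * ?a) *\<^sub>R k0)"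
    using para assms(6-9) unfolding strongly_paraconvex_def by auto
  moreover have "C * min l (1 - l) * ?a \<le> C * l * ?a"
    using assms(4,5) by (intro mult_right_mono mult_left_mono) auto
  then have "cone_le K (l *\<^sub>R F x1 + (1 - l) *\<^sub>R F x2 + (C * min l (1 - l) * ?a) *\<^sub>R k0)
      (l *\<^sub>R F x1 + (1 - l) *\<^sub>R F x2 + (C * l * ?a) *\<^sub>R k0)"
    using convex_cone_scaleR[OF K _ k0, of "C * l * ?a - C * min l (1 - l) * ?a"]
    unfolding cone_le_def by (simp add: scaleR_diff_left)
  ultimately show ?thesis by (rule cone_le_trans[OF K])
qed

lemma strongly_paraconvex_diff_quotient_almost_increasing:
  assumes para: "strongly_paraconvex K \<alpha> k0 C A F" and K: "convex_cone K" and k0: "k0 \<in> K"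
    and "0 \<le> C" and "0 \<le> \<alpha> t" and "x0 \<in> A" "x0 + t *\<^sub>R h \<in> A" and "norm h = 1"
    and "0 < s" "s < t"
  shows "cone_le K ((1 / s) *\<^sub>R (F (x0 + s *\<^sub>R h) - F x0))
    ((1 / t) *\<^sub>R (F (x0 + t *\<^sub>R h) - F x0) + (C * \<alpha> t / t) *\<^sub>R k0)"
proof -
  have "(s / t) *\<^sub>R (x0 + t *\<^sub>R h) + (1 - s / t) *\<^sub>R x0 = x0 + s *\<^sub>R h"
    using \<open>s < t\<close> \<open>0 < s\<close> by (simp add: algebra_simps)
  moreover have "norm (x0 + t *\<^sub>R h - x0) = t" using \<open>norm h = 1\<close> \<open>0 < s\<close> \<open>s < t\<close> by simp
  ultimately have "cone_le K (F (x0 + s *\<^sub>R h))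
      ((s / t) *\<^sub>R F (x0 + t *\<^sub>R h) + (1 - s / t) *\<^sub>R F x0 + (C * (s / t) * \<alpha> t) *\<^sub>R k0)"
    using strongly_paraconvex_le_weighted[OF para K k0 \<open>0 \<le> C\<close>, of "x0 + t *\<^sub>R h" x0 "s / t"]
      assms(5-7,9,10) by simp
  then have weighted: "(1 / s) *\<^sub>R ((s / t) *\<^sub>R F (x0 + t *\<^sub>R h) + (1 - s / t) *\<^sub>R F x0
      + (C * (s / t) * \<alpha> t) *\<^sub>R k0 - F (x0 + s *\<^sub>R h)) \<in> K"
    using \<open>0 < s\<close> convex_cone_scaleR[OF K] unfolding cone_le_def by simp
  have coeff: "(1 / s) * (s / t) = 1 / t" "(1 / s) * (1 - s / t) = 1 / s - 1 / t"
    "(1 / s) * (C * (s / t) * \<alpha> t) = C * \<alpha> t / t"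
    using \<open>0 < s\<close> \<open>s < t\<close> by (auto simp: field_simps)
  have "(1 / s) *\<^sub>R ((s / t) *\<^sub>R F (x0 + t *\<^sub>R h) + (1 - s / t) *\<^sub>R F x0
      + (C * (s / t) * \<alpha> t) *\<^sub>R k0 - F (x0 + s *\<^sub>R h))
    = ((1 / t) *\<^sub>R (F (x0 + t *\<^sub>R h) - F x0) + (C * \<alpha> t / t) *\<^sub>R k0)
      - (1 / s) *\<^sub>R (F (x0 + s *\<^sub>R h) - F x0)"
    unfolding scaleR_add_right scaleR_diff_right scaleR_scaleR coeff by (simp add: algebra_simps)
  then show ?thesis using weighted unfolding cone_le_def by simp
qed

lemma strongly_paraconvex_diff_quotient_lower_bound:
  assumes para: "strongly_paraconvex K \<alpha> k0 C A F" and K: "convex_cone K" and k0: "k0 \<in> K"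
    and "0 \<le> C" and \<alpha>_nonneg: "\<forall>r\<ge>0. 0 \<le> \<alpha> r" and \<alpha>_mono: "mono_on {0..} \<alpha>"
    and "x0 - \<sigma> *\<^sub>R h \<in> A" "x0 + t *\<^sub>R h \<in> A" and "norm h = 1" and "0 < t" "t \<le> \<sigma>"
  shows "cone_le K ((1 / \<sigma>) *\<^sub>R (F x0 - F (x0 - \<sigma> *\<^sub>R h)) - (C * \<alpha> (2 * \<sigma>) / \<sigma>) *\<^sub>R k0)
    ((1 / t) *\<^sub>R (F (x0 + t *\<^sub>R h) - F x0))"
proof -
  define l where "l = t / (\<sigma> + t)"
  have "0 \<le> l" "l \<le> 1" using \<open>0 < t\<close> \<open>t \<le> \<sigma>\<close> by (auto simp: l_def)
  have "l *\<^sub>R (x0 - \<sigma> *\<^sub>R h) + (1 - l) *\<^sub>R (x0 + t *\<^sub>R h) = x0 + (t - l * (\<sigma> + t)) *\<^sub>R h"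
    by (simp add: algebra_simps)
  also have "t - l * (\<sigma> + t) = 0" using \<open>0 < t\<close> \<open>t \<le> \<sigma>\<close> by (simp add: l_def)
  finally have point: "l *\<^sub>R (x0 - \<sigma> *\<^sub>R h) + (1 - l) *\<^sub>R (x0 + t *\<^sub>R h) = x0" by simp
  have "norm (x0 - \<sigma> *\<^sub>R h - (x0 + t *\<^sub>R h)) = \<sigma> + t"
    using \<open>norm h = 1\<close> \<open>0 < t\<close> \<open>t \<le> \<sigma>\<close> by (simp add: algebra_simps flip: scaleR_add_left)
  then have "cone_le K (F x0)
      (l *\<^sub>R F (x0 - \<sigma> *\<^sub>R h) + (1 - l) *\<^sub>R F (x0 + t *\<^sub>R h) + (C * l * \<alpha> (\<sigma> + t)) *\<^sub>R k0)"
    using strongly_paraconvex_le_weighted[OF para K k0 \<open>0 \<le> C\<close>, of "x0 - \<sigma> *\<^sub>R h" "x0 + t *\<^sub>R h" l]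
      point assms(7,8) \<alpha>_nonneg \<open>0 < t\<close> \<open>t \<le> \<sigma>\<close> \<open>0 \<le> l\<close> \<open>l \<le> 1\<close> by simp
  moreover define \<kappa> where "\<kappa> = (\<sigma> + t) / (\<sigma> * t)"
  ultimately have weighted: "\<kappa> *\<^sub>R (l *\<^sub>R F (x0 - \<sigma> *\<^sub>R h) + (1 - l) *\<^sub>R F (x0 + t *\<^sub>R h)
      + (C * l * \<alpha> (\<sigma> + t)) *\<^sub>R k0 - F x0) \<in> K"
    using \<open>0 < t\<close> \<open>t \<le> \<sigma>\<close> convex_cone_scaleR[OF K] unfolding cone_le_def by simp
  have "\<alpha> (\<sigma> + t) \<le> \<alpha> (2 * \<sigma>)"
    using \<open>0 < t\<close> \<open>t \<le> \<sigma>\<close> by (intro mono_onD[OF \<alpha>_mono]) auto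
  then have correction: "(C * (\<alpha> (2 * \<sigma>) - \<alpha> (\<sigma> + t)) / \<sigma>) *\<^sub>R k0 \<in> K"
    using \<open>0 \<le> C\<close> \<open>0 < t\<close> \<open>t \<le> \<sigma>\<close> convex_cone_scaleR[OF K _ k0] by simp
  have "\<sigma> \<noteq> 0" "t \<noteq> 0" "\<sigma> + t \<noteq> 0" using \<open>0 < t\<close> \<open>t \<le> \<sigma>\<close> by auto
  have "1 - l = \<sigma> / (\<sigma> + t)" using \<open>\<sigma> + t \<noteq> 0\<close> by (simp add: l_def field_simps)
  then have "\<kappa> * (1 - l) = 1 / t" using \<open>\<sigma> \<noteq> 0\<close> \<open>\<sigma> + t \<noteq> 0\<close> by (simp add: \<kappa>_def)
  moreover have \<kappa>_l: "\<kappa> * l = 1 / \<sigma>" using \<open>t \<noteq> 0\<close> \<open>\<sigma> + t \<noteq> 0\<close> by (simp add: \<kappa>_def l_def)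
  moreover have \<kappa>: "\<kappa> = 1 / \<sigma> + 1 / t" using \<open>\<sigma> \<noteq> 0\<close> \<open>t \<noteq> 0\<close> by (simp add: \<kappa>_def field_simps)
  moreover have "\<kappa> * (C * l * \<alpha> (\<sigma> + t)) = C * \<alpha> (\<sigma> + t) / \<sigma>"
    using \<kappa>_l by (simp add: ac_simps flip: mult.assoc)
  ultimately have coeff: "\<kappa> * l = 1 / \<sigma>" "\<kappa> * (1 - l) = 1 / t"
    "\<kappa> * (C * l * \<alpha> (\<sigma> + t)) = C * \<alpha> (\<sigma> + t) / \<sigma>" by blast+
  have "(1 / t) *\<^sub>R (F (x0 + t *\<^sub>R h) - F x0)
      - ((1 / \<sigma>) *\<^sub>R (F x0 - F (x0 - \<sigma> *\<^sub>R h)) - (C * \<alpha> (2 * \<sigma>) / \<sigma>) *\<^sub>R k0)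
    = \<kappa> *\<^sub>R (l *\<^sub>R F (x0 - \<sigma> *\<^sub>R h) + (1 - l) *\<^sub>R F (x0 + t *\<^sub>R h)
      + (C * l * \<alpha> (\<sigma> + t)) *\<^sub>R k0 - F x0) + (C * (\<alpha> (2 * \<sigma>) - \<alpha> (\<sigma> + t)) / \<sigma>) *\<^sub>R k0"
    unfolding scaleR_add_right scaleR_diff_right scaleR_scaleR coeff unfolding \<kappa>
    by (simp add: algebra_simps diff_divide_distrib)
  then show ?thesis
    unfolding cone_le_def using convex_cone_add[OF K weighted correction] by simp
qed

theorem theorem4p2:
  fixes K :: "'b::banach set" and F :: "'a::real_normed_vector \<Rightarrow> 'b"
    and \<alpha> :: "real \<Rightarrow> real" and A :: "'a set" and k0 :: 'b and C :: real
    and x0 h :: 'a and \<delta>0 :: real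
  assumes wsc: "weakly_sequentially_complete TYPE('b)"
    and K_cone: "cone K" and K_convex: "convex K" and K_closed: "closed K"
    and K_normal: "normal_cone K"
    and \<alpha>_nonneg: "\<forall>t\<ge>0. \<alpha> t \<ge> 0"
    and \<alpha>_mono: "mono_on {0..} \<alpha>"
    and \<alpha>_lim: "((\<lambda>t. \<alpha> t / t) \<longlongrightarrow> 0) (at_right 0)"
    and A_convex: "convex A"
    and k0: "k0 \<in> K" "k0 \<noteq> 0"
    and C: "C \<ge> 0"
    and para: "strongly_paraconvex K \<alpha> k0 C A F"
    and x0: "x0 \<in> A"
    and h: "norm h = 1"
    and \<delta>0: "\<delta>0 > 0"
    and line: "\<forall>t. -\<delta>0 < t \<and> t < \<delta>0 \<longrightarrow> x0 + t *\<^sub>R h \<in> A"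
  shows "\<exists>L. ((\<lambda>t. (1 / t) *\<^sub>R (F (x0 + t *\<^sub>R h) - F x0)) \<longlongrightarrow> L) (at_right 0)"
proof -
  have K: "convex_cone K" using convex_cone_of_cone[OF K_cone K_convex k0(1)] .
  define \<sigma> where "\<sigma> = \<delta>0 / 2"
  have \<sigma>: "0 < \<sigma>" "\<sigma> < \<delta>0" using \<delta>0 by (auto simp: \<sigma>_def)
  have on_line: "x0 + t *\<^sub>R h \<in> A" if "0 < t" "t \<le> \<sigma>" for t using line that \<sigma> by auto
  have "((\<lambda>t. C * (\<alpha> t / t)) \<longlongrightarrow> 0) (at_right 0)" by (rule tendsto_mult_right_zero[OF \<alpha>_lim])
  then have e: "((\<lambda>t. C * \<alpha> t / t) \<longlongrightarrow> 0) (at_right 0)" by simp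
  show ?thesis
  proof (rule almost_increasing_bounded_below_has_limit_at_right[OF wsc K K_closed K_normal k0(1) \<sigma>(1) _ _ e])
    show "cone_le K ((1 / s) *\<^sub>R (F (x0 + s *\<^sub>R h) - F x0))
        ((1 / t) *\<^sub>R (F (x0 + t *\<^sub>R h) - F x0) + (C * \<alpha> t / t) *\<^sub>R k0)"
      if "0 < s" "s < t" "t < \<sigma>" for s t
      using strongly_paraconvex_diff_quotient_almost_increasing[OF para K k0(1) C] \<alpha>_nonneg x0 h
        on_line that by simp
    show "cone_le K ((1 / \<sigma>) *\<^sub>R (F x0 - F (x0 - \<sigma> *\<^sub>R h)) - (C * \<alpha> (2 * \<sigma>) / \<sigma>) *\<^sub>R k0)
        ((1 / t) *\<^sub>R (F (x0 + t *\<^sub>R h) - F x0))"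
      if "0 < t" "t < \<sigma>" for t
      using strongly_paraconvex_diff_quotient_lower_bound[OF para K k0(1) C \<alpha>_nonneg \<alpha>_mono]
        line[rule_format, of "- \<sigma>"] \<sigma> h on_line that by simp
    show "0 \<le> C * \<alpha> t / t" if "0 < t" for t using C \<alpha>_nonneg that by simp
  qed
qed

end
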